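(* Let $\mathcal X$ be a finite set and $(F_x)_{x\in\mathcal X}$ mutually independent real random variables. Let $\epsilon>0$ and let $f_0\le f_1\le\dots\le f_l$ in $\mathbb R\cup\{\pm\infty\}$ with $f_0=-\infty$, $f_l=+\infty$, such that $\max_{x}\mathbb P[F_x\le f_1]\le2\epsilon$, $\max_x\mathbb P[F_x>f_{l-1}]\le2\epsilon$, and $\max_x\mathbb P[F_x\in(f_i,f_{i+1}]]\le2\epsilon$ for all $i=1,\dots,l-2$. Then for every $x\in\mathcal X$, $$\Big|\mathbb P[x\in X^*]-\sum_{i=0}^{l-1}\frac{g_x(f_{i+1})+g_x(f_i)}{2}\,\mathbb P[F_x\in(f_i,f_{i+1}]]\Big|\le\epsilon .$$
   Context: $X^*:=\arg\max_{z\in\mathcal X}F_z$ (a random subset), so $x\in X^*$ iff $F_x\ge F_z$ for all $z\neq x$. For $f\in\mathbb R\cup\{\pm\infty\}$, $g_x(f):=\prod_{z\in\mathcal X\setminus\{x\}}\mathbb P[F_z\le f]$ (so $g_x(-\infty)=0$, $g_x(+\infty)=1$). *)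

theory Defs
  imports "HOL-Probability.Probability"
begin

definition gfun :: "'a measure \<Rightarrow> 'i set \<Rightarrow> ('i \<Rightarrow> 'a \<Rightarrow> real) \<Rightarrow> 'i \<Rightarrow> ereal \<Rightarrow> real" where
  "gfun M X F x f = (\<Prod>z\<in>X - {x}. measure M {\<omega> \<in> space M. ereal (F z \<omega>) \<le> f})"

definition argmax_event :: "'a measure \<Rightarrow> 'i set \<Rightarrow> ('i \<Rightarrow> 'a \<Rightarrow> real) \<Rightarrow> 'i \<Rightarrow> 'a set" where
  "argmax_event M X F x = {\<omega> \<in> space M. \<forall>z\<in>X. F z \<omega> \<le> F x \<omega>}"

end

theory Submission
  imports Defs
begin

text \<open>Split the event that x is a maximiser by the bin (f i, f (i+1)] containing F x. Given
  F x in that bin, x certainly maximises if all other F z are at most f i, and can only maximise if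
  they are all at most f (i+1); by independence these events have probabilities g_x(f i) and
  g_x(f (i+1)) times the bin probability. The midpoint of this sandwich is therefore off by at most
  (g_x(f (i+1)) - g_x(f i)) \<epsilon>, because bins have probability at most 2 \<epsilon>, and these
  increments of g_x telescope to at most 1.\<close>

lemma abs_sub_midpoint_le:
  fixes P a b :: real
  assumes "b \<le> P" "P \<le> a"
  shows "\<bar>P - (a + b) / 2\<bar> \<le> (a - b) / 2"
  using assms by (simp add: abs_le_iff field_simps)

lemma abs_sum_sub_midpoint_sum_le:
  fixes a p G :: "nat \<Rightarrow> real" and \<epsilon> :: real
  assumes lower: "\<And>i. i < l \<Longrightarrow> G i * p i \<le> a i"
    and upper: "\<And>i. i < l \<Longrightarrow> a i \<le> G (Suc i) * p i"
    and p_le: "\<And>i. i < l \<Longrightarrow> p i \<le> 2 * \<epsilon>"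
    and G_step: "\<And>i. i < l \<Longrightarrow> G i \<le> G (Suc i)"
  shows "\<bar>(\<Sum>i<l. a i) - (\<Sum>i<l. (G (Suc i) + G i) / 2 * p i)\<bar> \<le> \<epsilon> * (G l - G 0)"
proof -
  have term_le: "\<bar>a i - (G (Suc i) + G i) / 2 * p i\<bar> \<le> \<epsilon> * (G (Suc i) - G i)" if "i < l" for i
  proof -
    have "\<bar>a i - (G (Suc i) * p i + G i * p i) / 2\<bar> \<le> (G (Suc i) * p i - G i * p i) / 2"
      using lower[OF that] upper[OF that] by (rule abs_sub_midpoint_le)
    also have "\<dots> = (G (Suc i) - G i) * p i / 2"
      by (simp add: algebra_simps)
    also have "\<dots> \<le> (G (Suc i) - G i) * (2 * \<epsilon>) / 2"
      using G_step[OF that] p_le[OF that] by (intro divide_right_mono mult_left_mono) auto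
    finally show ?thesis
      by (simp add: algebra_simps add_divide_distrib)
  qed
  have "\<bar>(\<Sum>i<l. a i) - (\<Sum>i<l. (G (Suc i) + G i) / 2 * p i)\<bar>
        \<le> (\<Sum>i<l. \<bar>a i - (G (Suc i) + G i) / 2 * p i\<bar>)"
    unfolding sum_subtractf[symmetric] by (rule sum_abs)
  also have "\<dots> \<le> (\<Sum>i<l. \<epsilon> * (G (Suc i) - G i))"
    using term_le by (intro sum_mono) auto
  also have "\<dots> = \<epsilon> * (G l - G 0)"
    by (simp add: sum_distrib_left[symmetric] sum_lessThan_telescope)
  finally show ?thesis .
qed

lemma exists_bin_containing:
  fixes f :: "nat \<Rightarrow> 'b::linorder"
  assumes "f 0 < v" "v \<le> f n"
  shows "\<exists>i<n. f i < v \<and> v \<le> f (Suc i)"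
  using assms(2)
proof (induction n)
  case 0
  then show ?case using assms(1) by simp
next
  case (Suc n)
  show ?case
  proof (cases "v \<le> f n")
    case True
    then show ?thesis using Suc.IH less_SucI by blast
  next
    case False
    then show ?thesis using Suc.prems by auto
  qed
qed

lemma bin_containing_unique:
  fixes f :: "nat \<Rightarrow> 'b::linorder"
  assumes mono: "\<And>i j. i \<le> j \<Longrightarrow> j \<le> l \<Longrightarrow> f i \<le> f j"
    and "i < l" "j < l"
    and "f i < v" "v \<le> f (Suc i)" "f j < v" "v \<le> f (Suc j)"
  shows "i = j"
proof (rule ccontr)
  assume "i \<noteq> j"
  then have "f (Suc i) \<le> f j \<or> f (Suc j) \<le> f i"
    using mono \<open>i < l\<close> \<open>j < l\<close> by (metis Suc_leI less_imp_le_nat linorder_neqE_nat)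
  then show False
    using assms(4-7) by auto
qed

lemma measure_bin_le:
  fixes f :: "nat \<Rightarrow> ereal" and Y :: "'a \<Rightarrow> real"
  assumes "f 0 = -\<infinity>" "f l = \<infinity>"
    and "measure M {\<omega> \<in> space M. ereal (Y \<omega>) \<le> f 1} \<le> \<delta>"
    and "measure M {\<omega> \<in> space M. ereal (Y \<omega>) > f (l - 1)} \<le> \<delta>"
    and "\<forall>i. 1 \<le> i \<and> i + 2 \<le> l \<longrightarrow>
           measure M {\<omega> \<in> space M. f i < ereal (Y \<omega>) \<and> ereal (Y \<omega>) \<le> f (Suc i)} \<le> \<delta>"
    and "i < l"
  shows "measure M {\<omega> \<in> space M. f i < ereal (Y \<omega>) \<and> ereal (Y \<omega>) \<le> f (Suc i)} \<le> \<delta>"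
proof -
  consider "i = 0" | "i \<noteq> 0" "Suc i = l" | "1 \<le> i \<and> i + 2 \<le> l"
    using \<open>i < l\<close> by linarith
  then show ?thesis
  proof cases
    case 1
    then show ?thesis using assms(1,3) by simp
  next
    case 2
    then have "i = l - 1" by simp
    then show ?thesis using 2 assms(2,4) by simp
  qed (use assms(5) in blast)
qed

context prob_space
begin

lemma measure_eq_sum_bins:
  fixes f :: "nat \<Rightarrow> ereal" and Y :: "'a \<Rightarrow> real"
  assumes "E \<in> events" "Y \<in> borel_measurable M"
    and mono: "\<And>i j. i \<le> j \<Longrightarrow> j \<le> l \<Longrightarrow> f i \<le> f j"
    and "f 0 = -\<infinity>" "f l = \<infinity>"
  shows "prob E = (\<Sum>i<l. prob (E \<inter> {\<omega> \<in> space M. f i < ereal (Y \<omega>) \<and> ereal (Y \<omega>) \<le> f (Suc i)}))"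
proof -
  define B where "B i = E \<inter> {\<omega> \<in> space M. f i < ereal (Y \<omega>) \<and> ereal (Y \<omega>) \<le> f (Suc i)}" for i
  have E_eq: "E = (\<Union>i<l. B i)"
  proof (intro equalityI subsetI)
    fix \<omega> assume "\<omega> \<in> E"
    moreover obtain i where "i < l" "f i < ereal (Y \<omega>)" "ereal (Y \<omega>) \<le> f (Suc i)"
      using exists_bin_containing[of f "ereal (Y \<omega>)" l] assms(4,5) by auto
    ultimately show "\<omega> \<in> (\<Union>i<l. B i)"
      using sets.sets_into_space[OF assms(1)] by (auto simp: B_def)
  qed (auto simp: B_def)
  have "disjoint_family_on B {..<l}"
    unfolding disjoint_family_on_def B_def
    using bin_containing_unique[OF mono] by (auto simp: lessThan_iff)
  moreover have "B i \<in> events" for i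
    unfolding B_def using assms(1,2) by measurable
  ultimately have "prob (\<Union>i<l. B i) = (\<Sum>i<l. prob (B i))"
    by (intro finite_measure_finite_Union) auto
  then show ?thesis
    unfolding B_def[symmetric] using E_eq by simp
qed

lemma gfun_nonneg: "0 \<le> gfun M X F x c"
  unfolding gfun_def by (auto intro: prod_nonneg)

lemma gfun_le_1: "gfun M X F x c \<le> 1"
  unfolding gfun_def by (auto intro: prod_le_1)

lemma gfun_mono:
  assumes "\<And>z. z \<in> X \<Longrightarrow> F z \<in> borel_measurable M" "a \<le> b"
  shows "gfun M X F x a \<le> gfun M X F x b"
  unfolding gfun_def
proof (rule prod_mono)
  fix z assume "z \<in> X - {x}"
  note [measurable] = assms(1)[of z]
  have "prob {\<omega> \<in> space M. ereal (F z \<omega>) \<le> a} \<le> prob {\<omega> \<in> space M. ereal (F z \<omega>) \<le> b}"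
    using \<open>z \<in> X - {x}\<close> \<open>a \<le> b\<close> by (intro finite_measure_mono) (auto, measurable)
  then show "0 \<le> prob {\<omega> \<in> space M. ereal (F z \<omega>) \<le> a} \<and>
      prob {\<omega> \<in> space M. ereal (F z \<omega>) \<le> a} \<le> prob {\<omega> \<in> space M. ereal (F z \<omega>) \<le> b}"
    by simp
qed

lemma argmax_event_in_events:
  assumes "finite X" "\<And>z. z \<in> X \<Longrightarrow> F z \<in> borel_measurable M" "x \<in> X"
  shows "argmax_event M X F x \<in> events"
  unfolding argmax_event_def
  using assms by (intro sets.sets_Collect_finite_All) (auto intro: borel_measurable_le)

lemma prob_bin_and_others_le:
  fixes a b c :: ereal
  assumes "finite X" "indep_vars (\<lambda>_. borel) F X" "x \<in> X"
  shows "prob {\<omega> \<in> space M. (a < ereal (F x \<omega>) \<and> ereal (F x \<omega>) \<le> b) \<and>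
                (\<forall>z\<in>X - {x}. ereal (F z \<omega>) \<le> c)}
       = prob {\<omega> \<in> space M. a < ereal (F x \<omega>) \<and> ereal (F x \<omega>) \<le> b} * gfun M X F x c"
proof -
  define Q where "Q i t \<longleftrightarrow> (if i = x then a < ereal t \<and> ereal t \<le> b else ereal t \<le> c)" for i t
  have "indep_events (\<lambda>i. {\<omega> \<in> space M. Q i (F i \<omega>)}) X"
    using assms(2) by (rule indep_eventsI_indep_vars) (auto simp: Q_def)
  then have "prob (\<Inter>i\<in>X. {\<omega> \<in> space M. Q i (F i \<omega>)}) = (\<Prod>i\<in>X. prob {\<omega> \<in> space M. Q i (F i \<omega>)})"
    using assms(1,3) unfolding indep_events_def by blast
  also have "\<dots> = prob {\<omega> \<in> space M. Q x (F x \<omega>)} * (\<Prod>i\<in>X - {x}. prob {\<omega> \<in> space M. Q i (F i \<omega>)})"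
    using assms(1,3) by (simp add: prod.remove)
  also have "(\<Prod>i\<in>X - {x}. prob {\<omega> \<in> space M. Q i (F i \<omega>)}) = gfun M X F x c"
    unfolding gfun_def by (rule prod.cong) (auto simp: Q_def)
  also have "(\<Inter>i\<in>X. {\<omega> \<in> space M. Q i (F i \<omega>)}) = {\<omega> \<in> space M. (a < ereal (F x \<omega>) \<and> ereal (F x \<omega>) \<le> b) \<and>
                (\<forall>z\<in>X - {x}. ereal (F z \<omega>) \<le> c)}"
    using assms(3) by (auto simp: Q_def)
  finally show ?thesis
    by (simp add: Q_def)
qed

lemma prob_argmax_in_bin_bounds:
  fixes a b :: ereal
  assumes "finite X" "indep_vars (\<lambda>_. borel) F X" "x \<in> X"
  defines "B \<equiv> {\<omega> \<in> space M. a < ereal (F x \<omega>) \<and> ereal (F x \<omega>) \<le> b}"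
  shows "prob B * gfun M X F x a \<le> prob (argmax_event M X F x \<inter> B)"
    and "prob (argmax_event M X F x \<inter> B) \<le> prob B * gfun M X F x b"
proof -
  have rv[measurable]: "F z \<in> borel_measurable M" if "z \<in> X" for z
    using assms(2) that unfolding indep_vars_def by auto
  define others_le where "others_le c = {\<omega> \<in> space M. (a < ereal (F x \<omega>) \<and> ereal (F x \<omega>) \<le> b) \<and>
      (\<forall>z\<in>X - {x}. ereal (F z \<omega>) \<le> c)}" for c
  have "others_le a \<subseteq> argmax_event M X F x \<inter> B"
  proof
    fix \<omega> assume \<omega>: "\<omega> \<in> others_le a"
    have "F z \<omega> \<le> F x \<omega>" if "z \<in> X - {x}" for z
    proof -
      have "ereal (F z \<omega>) < ereal (F x \<omega>)"
        using \<omega> that unfolding others_le_def by (blast intro: le_less_trans)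
      then show ?thesis by simp
    qed
    then show "\<omega> \<in> argmax_event M X F x \<inter> B"
      using \<omega> unfolding others_le_def argmax_event_def B_def by auto
  qed
  moreover have "argmax_event M X F x \<inter> B \<subseteq> others_le b"
    unfolding argmax_event_def B_def others_le_def by (auto intro: order_trans[rotated])
  moreover have "argmax_event M X F x \<inter> B \<in> events"
  proof (rule sets.Int)
    show "argmax_event M X F x \<in> events"
      using assms(1) rv assms(3) by (rule argmax_event_in_events)
    show "B \<in> events"
      unfolding B_def using rv[OF assms(3)] by measurable
  qed
  moreover have "others_le b \<in> events"
    unfolding others_le_def
  proof (rule sets.sets_Collect_conj)
    show "{\<omega> \<in> space M. a < ereal (F x \<omega>) \<and> ereal (F x \<omega>) \<le> b} \<in> events"
      using rv[OF assms(3)] by measurable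
    show "{\<omega> \<in> space M. \<forall>z\<in>X - {x}. ereal (F z \<omega>) \<le> b} \<in> events"
    proof (rule sets.sets_Collect_finite_All)
      fix z assume "z \<in> X - {x}"
      then have [measurable]: "F z \<in> borel_measurable M" using rv by simp
      show "{\<omega> \<in> space M. ereal (F z \<omega>) \<le> b} \<in> events" by measurable
    qed (use assms(1) in simp)
  qed
  moreover have "prob (others_le c) = prob B * gfun M X F x c" for c
    unfolding others_le_def B_def by (rule prob_bin_and_others_le[OF assms(1-3)])
  ultimately show "prob B * gfun M X F x a \<le> prob (argmax_event M X F x \<inter> B)"
    and "prob (argmax_event M X F x \<inter> B) \<le> prob B * gfun M X F x b"
    by (metis finite_measure_mono)+
qed

end

theorem proposition8:
  fixes M :: "'a measure" and X :: "'i set" and F :: "'i \<Rightarrow> 'a \<Rightarrow> real"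
    and \<epsilon> :: real and f :: "nat \<Rightarrow> ereal" and l :: nat and x :: 'i
  assumes "prob_space M"
    and "finite X"
    and "prob_space.indep_vars M (\<lambda>_. borel) F X"
    and "\<epsilon> > 0"
    and "\<And>i j. i \<le> j \<Longrightarrow> j \<le> l \<Longrightarrow> f i \<le> f j"
    and "f 0 = -\<infinity>" and "f l = \<infinity>"
    and "\<forall>y\<in>X. measure M {\<omega> \<in> space M. ereal (F y \<omega>) \<le> f 1} \<le> 2 * \<epsilon>"
    and "\<forall>y\<in>X. measure M {\<omega> \<in> space M. ereal (F y \<omega>) > f (l - 1)} \<le> 2 * \<epsilon>"
    and "\<forall>i. 1 \<le> i \<and> i + 2 \<le> l \<longrightarrow> (\<forall>y\<in>X.
           measure M {\<omega> \<in> space M. f i < ereal (F y \<omega>) \<and> ereal (F y \<omega>) \<le> f (Suc i)} \<le> 2 * \<epsilon>)"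
    and "x \<in> X"
  shows "\<bar>measure M (argmax_event M X F x)
          - (\<Sum>i<l. (gfun M X F x (f (Suc i)) + gfun M X F x (f i)) / 2
                 * measure M {\<omega> \<in> space M. f i < ereal (F x \<omega>) \<and> ereal (F x \<omega>) \<le> f (Suc i)})\<bar>
         \<le> \<epsilon>"
proof -
  interpret prob_space M by (rule assms(1))
  have rv: "F z \<in> borel_measurable M" if "z \<in> X" for z
    using assms(3) that unfolding indep_vars_def by auto
  define g where "g c = gfun M X F x c" for c
  define B where "B i = {\<omega> \<in> space M. f i < ereal (F x \<omega>) \<and> ereal (F x \<omega>) \<le> f (Suc i)}" for i
  have "prob (argmax_event M X F x) = (\<Sum>i<l. prob (argmax_event M X F x \<inter> B i))"
    unfolding B_def using argmax_event_in_events[OF assms(2) rv assms(11)] rv[OF assms(11)]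
    by (rule measure_eq_sum_bins) (use assms(5-7) in auto)
  moreover have "\<bar>(\<Sum>i<l. prob (argmax_event M X F x \<inter> B i))
      - (\<Sum>i<l. (g (f (Suc i)) + g (f i)) / 2 * prob (B i))\<bar> \<le> \<epsilon> * (g (f l) - g (f 0))"
  proof (rule abs_sum_sub_midpoint_sum_le)
    fix i assume "i < l"
    show "g (f i) * prob (B i) \<le> prob (argmax_event M X F x \<inter> B i)"
      "prob (argmax_event M X F x \<inter> B i) \<le> g (f (Suc i)) * prob (B i)"
      using prob_argmax_in_bin_bounds[OF assms(2,3,11)] by (simp_all add: g_def B_def mult.commute)
    show "prob (B i) \<le> 2 * \<epsilon>"
      unfolding B_def using assms(6-11) \<open>i < l\<close> by (intro measure_bin_le) auto
    show "g (f i) \<le> g (f (Suc i))"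
      unfolding g_def using rv assms(5) \<open>i < l\<close> by (intro gfun_mono) auto
  qed
  moreover have "\<epsilon> * (g (f l) - g (f 0)) \<le> \<epsilon>"
    using assms(4) gfun_nonneg[of X F x "f 0"] gfun_le_1[of X F x "f l"] unfolding g_def
    by (simp add: mult_left_le)
  ultimately show ?thesis
    by (simp add: g_def B_def)
qed

end
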